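(* Let $\Theta=\Theta^1\times\cdots\times\Theta^k\subseteq\mathbb{R}^p$ be a Cartesian product of convex sets, let $f:\mathbb{R}^p\to\mathbb{R}$ be continuous, convex and bounded below with a minimizer $\theta^\star$ on $\Theta$, $f^\star\triangleq f(\theta^\star)$, and let $\delta\triangleq1/k$. Consider the randomized block coordinate scheme: given $\theta_0\in\Theta$, for $n\ge1$ choose a separable majorant function $g_n(\theta)=\sum_{i=1}^kg_n^i(\theta^i)$ in $\mathcal{S}_{L,\rho}(f,\theta_{n-1})$ with $\rho\ge L$, pick $\hat\imath_n\in\{1,\dots,k\}$ uniformly at random (independently), set $\theta_n^{\hat\imath_n}\in\operatorname{arg\,min}_{\theta^{\hat\imath_n}\in\Theta^{\hat\imath_n}}g_n^{\hat\imath_n}(\theta^{\hat\imath_n})$ and $\theta_n^i=\theta_{n-1}^i$ for $i\ne\hat\imath_n$. Then $(f(\theta_n))_{n\ge0}$ converges almost surely to $f^\star$ and $$\mathbb{E}[f(\theta_n)-f^\star]\le\frac{C_0}{(1-\delta)+\delta n}\quad\text{for all }n\ge1,$$ with $C_0\triangleq(1-\delta)(f(\theta_0)-f^\star)+\frac{(1-\delta)\rho+\delta L}{2}\|\theta_0-\theta^\star\|_2^2$. If moreover $f$ is $\mu$-strongly convex, then for all $n\ge1$, $$\frac{L}{2}\mathbb{E}[\|\theta^\star-\theta_n\|_2^2]\le C_0\Big((1-\delta)+\delta\frac{L}{\rho+\mu}\Big)^n,\qquad \mathbb{E}[f(\theta_n)-f^\star]\le\frac{C_0}{\delta}\Big(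(1-\delta)+\delta\frac{L}{\rho+\mu}\Big)^{n-1}.$$
   Context: First-order surrogates: $g:\mathbb{R}^p\to\mathbb{R}$ belongs to $\mathcal{S}_L(f,\kappa)$ if (a) $g(\theta')\ge f(\theta')$ for all $\theta'\in\operatorname{arg\,min}_{\theta\in\Theta}g(\theta)$, and (b) $h\triangleq g-f$ is differentiable with $L$-Lipschitz gradient, $h(\kappa)=0$, $\nabla h(\kappa)=0$; $\mathcal{S}_{L,\rho}(f,\kappa)$ is the subset of $\rho$-strongly convex elements. A majorant function satisfies $g\ge f$ everywhere. The minimizers are assumed to exist. *)

theory Defs
  imports "HOL-Analysis.Analysis" "HOL-Probability.Probability"
begin

definition strongly_convex_on :: "'a::real_normed_vector set \<Rightarrow> ('a \<Rightarrow> real) \<Rightarrow> real \<Rightarrow> bool" where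
  "strongly_convex_on A g rho \<longleftrightarrow>
     (\<forall>x\<in>A. \<forall>y\<in>A. \<forall>t\<in>{0..1}.
        g ((1 - t) *\<^sub>R x + t *\<^sub>R y) \<le> (1 - t) * g x + t * g y - rho / 2 * t * (1 - t) * (norm (x - y))\<^sup>2)"

definition lipschitz_gradient :: "real \<Rightarrow> ('a::real_inner \<Rightarrow> real) \<Rightarrow> ('a \<Rightarrow> 'a) \<Rightarrow> bool" where
  "lipschitz_gradient L h grad \<longleftrightarrow>
     (\<forall>x. (h has_derivative (\<lambda>v. grad x \<bullet> v)) (at x)) \<and>
     (\<forall>x y. norm (grad x - grad y) \<le> L * norm (x - y))"

definition first_order_surrogate ::
  "'a::real_inner set \<Rightarrow> real \<Rightarrow> ('a \<Rightarrow> real) \<Rightarrow> 'a \<Rightarrow> ('a \<Rightarrow> real) \<Rightarrow> bool" where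
  "first_order_surrogate Theta L f kappa g \<longleftrightarrow>
     (\<forall>t'. (t' \<in> Theta \<and> (\<forall>t\<in>Theta. g t' \<le> g t)) \<longrightarrow> f t' \<le> g t') \<and>
     (\<exists>grad. lipschitz_gradient L (\<lambda>x. g x - f x) grad \<and>
             g kappa - f kappa = 0 \<and> grad kappa = 0)"

definition first_order_surrogate_sc ::
  "'a::real_inner set \<Rightarrow> real \<Rightarrow> real \<Rightarrow> ('a \<Rightarrow> real) \<Rightarrow> 'a \<Rightarrow> ('a \<Rightarrow> real) \<Rightarrow> bool" where
  "first_order_surrogate_sc Theta L rho f kappa g \<longleftrightarrow>
     first_order_surrogate Theta L f kappa g \<and> strongly_convex_on UNIV g rho"

text \<open>Block projection: keep coordinates in B, zero the others (identifies R^{B} with a subspace of R^p).\<close>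
definition blockproj :: "'n set \<Rightarrow> real ^ 'n \<Rightarrow> real ^ 'n" where
  "blockproj B x = (\<chi> j. if j \<in> B then x $ j else 0)"

definition block_product :: "nat \<Rightarrow> (nat \<Rightarrow> 'n set) \<Rightarrow> (nat \<Rightarrow> (real ^ 'n) set) \<Rightarrow> (real ^ 'n) set" where
  "block_product k B Th = {x. \<forall>i<k. blockproj (B i) x \<in> Th i}"

definition separable_fun :: "nat \<Rightarrow> (nat \<Rightarrow> 'n set) \<Rightarrow> (nat \<Rightarrow> real ^ 'n \<Rightarrow> real) \<Rightarrow> real ^ 'n \<Rightarrow> real" where
  "separable_fun k B gi x = (\<Sum>i<k. gi i (blockproj (B i) x))"

text \<open>History of the first n random block indices (index sequence iota 0, iota 1, ... stands for i_1, i_2, ...).\<close>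
definition history :: "(nat \<Rightarrow> 'w \<Rightarrow> nat) \<Rightarrow> nat \<Rightarrow> 'w \<Rightarrow> nat list" where
  "history iota n w = map (\<lambda>j. iota j w) [0..<n]"

end

theory Submission
  imports Defs
begin

text \<open>Index the iterates by the history h of chosen blocks and write gap h = f(x h) - f* and
  sqdist h = |theta* - x h|^2. All k successors of x h are assembled from one point, the minimizer
  of the separable surrogate g_h over all blocks simultaneously. Majorization, the quadratic bound
  on g_h - f and the rho-strong convexity of g_h at that point therefore yield, after averaging over
  the k successors, E[gap_(n+1)] + rho/2 E[sqdist_(n+1)] <= (1 - delta) E[gap_n]
  + ((1 - delta) rho + delta L)/2 E[sqdist_n]. The gap is nonincreasing along every path, so
  telescoping gives the 1/n rate, and under mu-strong convexity gap >= mu/2 sqdist makes the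
  potential gap + rho/2 sqdist contract geometrically. Expectations are plain averages over index
  lists because the history is uniformly distributed; almost sure convergence follows from the
  monotonicity of the gap together with Markov's inequality.\<close>

lemma sublinear_rate_from_recursion:
  fixes E D :: "nat \<Rightarrow> real" and \<delta> c r :: real
  assumes "0 \<le> \<delta>" "c \<le> r" "0 \<le> r"
    and D_nonneg: "\<And>n. 0 \<le> D n"
    and E_antimono: "\<And>n. E (Suc n) \<le> E n"
    and recursion: "\<And>n. E (Suc n) + r / 2 * D (Suc n) \<le> (1 - \<delta>) * E n + c / 2 * D n"
    and "1 \<le> n"
  shows "E n * ((1 - \<delta>) + \<delta> * real n) \<le> (1 - \<delta>) * E 0 + c / 2 * D 0"
proof -
  have telescoped: "E m + \<delta> * (\<Sum>j=1..<m. E j) + r / 2 * D m \<le> (1 - \<delta>) * E 0 + c / 2 * D 0"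
    if "1 \<le> m" for m
    using that
  proof (induction m rule: dec_induct)
    case base
    then show ?case using recursion[of 0] by simp
  next
    case (step m)
    have "c / 2 * D m \<le> r / 2 * D m"
      using \<open>c \<le> r\<close> D_nonneg[of m] by (simp add: mult_right_mono)
    then show ?case using recursion[of m] step.IH step.hyps by (simp add: algebra_simps)
  qed
  have "decseq E" using E_antimono by (rule decseq_SucI)
  then have "(\<Sum>j=1..<n. E n) \<le> (\<Sum>j=1..<n. E j)"
    by (intro sum_mono) (simp add: decseqD)
  then have "\<delta> * ((real n - 1) * E n) \<le> \<delta> * (\<Sum>j=1..<n. E j)"
    using \<open>0 \<le> \<delta>\<close> \<open>1 \<le> n\<close> by (intro mult_left_mono) (simp_all add: of_nat_diff)
  moreover have "0 \<le> r / 2 * D n" using \<open>0 \<le> r\<close> D_nonneg[of n] by simp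
  ultimately show ?thesis using telescoped[OF \<open>1 \<le> n\<close>] by (simp add: algebra_simps)
qed

lemma geometric_decay:
  fixes u :: "nat \<Rightarrow> real"
  assumes "0 \<le> q" and "\<And>n. u (Suc n) \<le> q * u n"
  shows "u n \<le> q ^ n * u 0"
proof (induction n)
  case (Suc n)
  have "u (Suc n) \<le> q * u n" by (rule assms(2))
  also have "\<dots> \<le> q * (q ^ n * u 0)" using Suc.IH assms(1) by (rule mult_left_mono)
  finally show ?case by simp
qed simp

lemma potential_contraction:
  fixes e d e' d' \<delta> L r \<mu> :: real
  assumes "0 \<le> \<delta>" "0 \<le> L" "0 < r + \<mu>"
    and step: "e' + r / 2 * d' \<le> (1 - \<delta>) * e + ((1 - \<delta>) * r + \<delta> * L) / 2 * d"
    and growth: "\<mu> / 2 * d \<le> e"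
  shows "e' + r / 2 * d' \<le> ((1 - \<delta>) + \<delta> * (L / (r + \<mu>))) * (e + r / 2 * d)"
proof -
  have "((1 - \<delta>) + \<delta> * (L / (r + \<mu>))) * (e + r / 2 * d)
        - ((1 - \<delta>) * e + ((1 - \<delta>) * r + \<delta> * L) / 2 * d)
      = \<delta> * L / (r + \<mu>) * (e - \<mu> / 2 * d)"
    using \<open>0 < r + \<mu>\<close> by (simp add: field_simps)
  also have "\<dots> \<ge> 0" using growth assms(1-3) by simp
  finally show ?thesis using step by linarith
qed

lemma linear_rate_from_recursion:
  fixes E D :: "nat \<Rightarrow> real" and \<delta> L r \<mu> :: real
  defines "q \<equiv> (1 - \<delta>) + \<delta> * (L / (r + \<mu>))"
    and "C \<equiv> (1 - \<delta>) * E 0 + ((1 - \<delta>) * r + \<delta> * L) / 2 * D 0"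
  assumes \<delta>: "0 < \<delta>" "\<delta> \<le> 1" and L: "0 \<le> L" "L \<le> r" and "0 < \<mu>"
    and D_nonneg: "\<And>n. 0 \<le> D n" and E_nonneg: "\<And>n. 0 \<le> E n"
    and recursion: "\<And>n. E (Suc n) + r / 2 * D (Suc n)
                         \<le> (1 - \<delta>) * E n + ((1 - \<delta>) * r + \<delta> * L) / 2 * D n"
    and D_contraction: "\<And>n. D (Suc n) \<le> q * D n"
    and growth: "\<And>n. \<mu> / 2 * D n \<le> E n"
    and "1 \<le> n"
  shows "L / 2 * D n \<le> C * q ^ n" and "E n \<le> C / \<delta> * q ^ (n - 1)"
proof -
  have "0 < r + \<mu>" using L \<open>0 < \<mu>\<close> by linarith
  then have "0 \<le> q" unfolding q_def using \<delta> L by simp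
  have "C - L / 2 * D 0 = (1 - \<delta>) * E 0 + (1 - \<delta>) * (r - L) / 2 * D 0"
    unfolding C_def by (simp add: field_simps)
  also have "\<dots> \<ge> 0" using \<delta> L D_nonneg[of 0] E_nonneg[of 0] by simp
  finally have "L / 2 * D 0 \<le> C" by simp
  have "L / 2 * D n \<le> L / 2 * (q ^ n * D 0)"
    using geometric_decay[where u = D, OF \<open>0 \<le> q\<close> D_contraction] L by (simp add: mult_left_mono)
  also have "\<dots> = q ^ n * (L / 2 * D 0)" by simp
  also have "\<dots> \<le> q ^ n * C" using \<open>L / 2 * D 0 \<le> C\<close> \<open>0 \<le> q\<close> by (intro mult_left_mono) simp_all
  finally show "L / 2 * D n \<le> C * q ^ n" by (simp add: mult.commute)
  have "E (Suc m) + r / 2 * D (Suc m) \<le> q ^ m * C" for m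
  proof -
    have "E (Suc m) + r / 2 * D (Suc m) \<le> q ^ m * (E 1 + r / 2 * D 1)"
      using geometric_decay[where u = "\<lambda>m. E (Suc m) + r / 2 * D (Suc m)", OF \<open>0 \<le> q\<close>]
        potential_contraction[OF _ L(1) \<open>0 < r + \<mu>\<close> recursion growth] \<delta>
      unfolding q_def by simp
    also have "\<dots> \<le> q ^ m * C"
      using recursion[of 0] \<open>0 \<le> q\<close> unfolding C_def by (intro mult_left_mono) simp_all
    finally show ?thesis .
  qed
  from this[of "n - 1"] have "E n + r / 2 * D n \<le> C * q ^ (n - 1)"
    using \<open>1 \<le> n\<close> by (simp add: mult.commute)
  moreover have "0 \<le> r / 2 * D n" using D_nonneg[of n] L by simp
  ultimately have "E n \<le> C * q ^ (n - 1)" by linarith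
  also have "\<dots> \<le> C / \<delta> * q ^ (n - 1)"
  proof -
    have "0 \<le> L / 2 * D 0" using L D_nonneg[of 0] by simp
    then have "C * \<delta> \<le> C" using \<open>L / 2 * D 0 \<le> C\<close> \<delta> by (simp add: mult_left_le)
    then show ?thesis using \<delta> \<open>0 \<le> q\<close> by (intro mult_right_mono) (simp_all add: le_divide_eq)
  qed
  finally show "E n \<le> C / \<delta> * q ^ (n - 1)" .
qed

lemma lipschitz_gradient_nonneg:
  fixes grad :: "'a::euclidean_space \<Rightarrow> 'a"
  assumes "lipschitz_gradient L h grad"
  shows "0 \<le> L"
proof -
  obtain b :: 'a where "b \<in> Basis" using nonempty_Basis by blast
  then have "norm b = 1" by simp
  moreover have "norm (grad b - grad 0) \<le> L * norm (b - 0)"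
    using assms unfolding lipschitz_gradient_def by blast
  ultimately show ?thesis by (metis mult.right_neutral norm_ge_zero order_trans diff_zero)
qed

lemma lipschitz_gradient_quadratic_bound:
  fixes h :: "'a::real_inner \<Rightarrow> real"
  assumes lg: "lipschitz_gradient L h grad" and "h \<kappa> = 0" and "grad \<kappa> = 0"
  shows "h y \<le> L / 2 * (norm (y - \<kappa>))\<^sup>2"
proof -
  define v where "v = y - \<kappa>"
  have der: "\<And>z. (h has_derivative (\<lambda>u. grad z \<bullet> u)) (at z)"
   and lip: "\<And>a b. norm (grad a - grad b) \<le> L * norm (a - b)"
    using lg unfolding lipschitz_gradient_def by auto
  define \<phi> where "\<phi> t = h (\<kappa> + t *\<^sub>R v) - L / 2 * t\<^sup>2 * (norm v)\<^sup>2" for t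
  have \<phi>_deriv: "(\<phi> has_real_derivative (grad (\<kappa> + t *\<^sub>R v) \<bullet> v - L * t * (norm v)\<^sup>2)) (at t)" for t
  proof -
    have "((\<lambda>t. \<kappa> + t *\<^sub>R v) has_derivative (\<lambda>s. s *\<^sub>R v)) (at t)"
      by (auto intro!: derivative_eq_intros)
    from has_derivative_compose[OF this der]
    have "((\<lambda>t. h (\<kappa> + t *\<^sub>R v)) has_derivative (\<lambda>s. grad (\<kappa> + t *\<^sub>R v) \<bullet> (s *\<^sub>R v))) (at t)"
      by (simp add: o_def)
    moreover have "(\<lambda>s. grad (\<kappa> + t *\<^sub>R v) \<bullet> (s *\<^sub>R v)) = (*) (grad (\<kappa> + t *\<^sub>R v) \<bullet> v)"
      by (auto simp: fun_eq_iff)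
    ultimately have "((\<lambda>t. h (\<kappa> + t *\<^sub>R v)) has_real_derivative (grad (\<kappa> + t *\<^sub>R v) \<bullet> v)) (at t)"
      unfolding has_field_derivative_def by simp
    moreover have "((\<lambda>t. L / 2 * t\<^sup>2 * (norm v)\<^sup>2) has_real_derivative (L * t * (norm v)\<^sup>2)) (at t)"
      by (auto intro!: derivative_eq_intros)
    ultimately show ?thesis unfolding \<phi>_def by (rule DERIV_diff)
  qed
  have \<phi>_deriv_nonpos: "grad (\<kappa> + t *\<^sub>R v) \<bullet> v - L * t * (norm v)\<^sup>2 \<le> 0" if "0 \<le> t" for t
  proof -
    have "grad (\<kappa> + t *\<^sub>R v) \<bullet> v \<le> norm (grad (\<kappa> + t *\<^sub>R v) - grad \<kappa>) * norm v"
      using norm_cauchy_schwarz \<open>grad \<kappa> = 0\<close> by simp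
    also have "\<dots> \<le> L * norm (t *\<^sub>R v) * norm v"
      using lip[of "\<kappa> + t *\<^sub>R v" \<kappa>] by (simp add: mult_right_mono)
    also have "\<dots> = L * t * (norm v)\<^sup>2"
      using that by (simp add: power2_eq_square)
    finally show ?thesis by simp
  qed
  have "\<phi> 1 \<le> \<phi> 0"
  proof (rule DERIV_nonpos_imp_nonincreasing[of 0 1 \<phi>])
    fix t :: real assume "0 \<le> t"
    then show "\<exists>y. (\<phi> has_real_derivative y) (at t) \<and> y \<le> 0" using \<phi>_deriv \<phi>_deriv_nonpos by blast
  qed simp
  then show ?thesis unfolding \<phi>_def v_def using \<open>h \<kappa> = 0\<close> by simp
qed

lemma strongly_convex_on_minimizer_growth:
  fixes g :: "'a::real_normed_vector \<Rightarrow> real"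
  assumes sc: "strongly_convex_on UNIV g r" and "convex S" "y \<in> S" "x \<in> S"
    and y_min: "\<forall>z\<in>S. g y \<le> g z"
  shows "g y + r / 2 * (norm (x - y))\<^sup>2 \<le> g x"
proof -
  define N where "N = r / 2 * (norm (x - y))\<^sup>2"
  \<comment> \<open>compare g y with g on the segment towards x, then let the step t tend to 0\<close>
  have segment: "(1 - t) * N \<le> g x - g y" if "0 < t" "t < 1" for t
  proof -
    have "(1 - t) *\<^sub>R y + t *\<^sub>R x \<in> S"
      using \<open>convex S\<close> \<open>y \<in> S\<close> \<open>x \<in> S\<close> that unfolding convex_def by auto
    then have "g y \<le> g ((1 - t) *\<^sub>R y + t *\<^sub>R x)" using y_min by blast
    also have "\<dots> \<le> (1 - t) * g y + t * g x - r / 2 * t * (1 - t) * (norm (y - x))\<^sup>2"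
      using sc that unfolding strongly_convex_on_def by auto
    finally have "t * ((1 - t) * N) \<le> t * (g x - g y)"
      unfolding N_def by (simp add: algebra_simps norm_minus_commute)
    then show ?thesis using that by simp
  qed
  have "((\<lambda>t. (1 - t) * N) \<longlongrightarrow> (1 - 0) * N) (at_right 0)"
    by (intro tendsto_intros)
  moreover have "eventually (\<lambda>t. (1 - t) * N \<le> g x - g y) (at_right 0)"
    using eventually_at_right_real[OF zero_less_one] by eventually_elim (simp add: segment)
  ultimately have "(1 - 0) * N \<le> g x - g y"
    by (rule tendsto_upperbound) simp
  then show ?thesis unfolding N_def by simp
qed

lemma blockproj_diff: "blockproj S (a - b) = blockproj S a - blockproj S b"
  by (simp add: blockproj_def vec_eq_iff)

lemma blockproj_add: "blockproj S (a + b) = blockproj S a + blockproj S b"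
  by (simp add: blockproj_def vec_eq_iff)

lemma blockproj_scaleR: "blockproj S (c *\<^sub>R a) = c *\<^sub>R blockproj S a"
  by (simp add: blockproj_def vec_eq_iff)

lemma blockproj_sum: "blockproj S (\<Sum>i\<in>I. a i) = (\<Sum>i\<in>I. blockproj S (a i))"
  by (induction I rule: infinite_finite_induct) (auto simp: blockproj_add blockproj_def vec_eq_iff)

lemma blockproj_blockproj: "blockproj S (blockproj T y) = blockproj (S \<inter> T) y"
  by (simp add: blockproj_def vec_eq_iff)

lemma blockproj_empty: "blockproj {} y = 0"
  by (simp add: blockproj_def vec_eq_iff)

lemma convex_block_product:
  assumes "\<forall>i<k. convex (Th i)"
  shows "convex (block_product k B Th)"
  using assms unfolding convex_def block_product_def by (auto simp: blockproj_add blockproj_scaleR)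

lemma sum_sum_diagonal_if:
  fixes a b :: "nat \<Rightarrow> real"
  shows "(\<Sum>i<k. \<Sum>j<k. if j = i then a j else b j) = (\<Sum>j<k. a j) + (real k - 1) * (\<Sum>j<k. b j)"
proof -
  have "(\<Sum>i<k. \<Sum>j<k. if j = i then a j else b j) = (\<Sum>j<k. \<Sum>i<k. b j + (if j = i then a j - b j else 0))"
    by (subst sum.swap) (intro sum.cong refl, auto)
  also have "\<dots> = (\<Sum>j<k. a j + (real k - 1) * b j)"
    by (intro sum.cong refl) (simp add: sum.distrib algebra_simps)
  finally show ?thesis by (simp add: sum.distrib sum_distrib_left)
qed

lemma sum_separable_fun_single_block_updates:
  assumes "\<And>i j. i < k \<Longrightarrow> j < k \<Longrightarrow>
             blockproj (B j) (y i) = (if j = i then blockproj (B j) z else blockproj (B j) x)"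
  shows "(\<Sum>i<k. separable_fun k B G (y i)) = separable_fun k B G z + (real k - 1) * separable_fun k B G x"
proof -
  have "(\<Sum>i<k. separable_fun k B G (y i))
      = (\<Sum>i<k. \<Sum>j<k. if j = i then G j (blockproj (B j) z) else G j (blockproj (B j) x))"
    unfolding separable_fun_def using assms by (intro sum.cong refl) auto
  then show ?thesis unfolding sum_sum_diagonal_if separable_fun_def .
qed

locale block_partition =
  fixes k :: nat and B :: "nat \<Rightarrow> 'n::finite set"
  assumes blocks_disj: "\<forall>i<k. \<forall>j<k. i \<noteq> j \<longrightarrow> B i \<inter> B j = {}"
    and blocks_cover: "(\<Union>i<k. B i) = UNIV"
begin

lemma k_pos: "1 \<le> k"
proof (rule ccontr)
  assume "\<not> 1 \<le> k"
  then have "k = 0" by simp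
  then show False using blocks_cover by simp
qed

lemma sum_if_in_block:
  "(\<Sum>i<k. if c \<in> B i then a else (0::'b::comm_monoid_add)) = a"
proof -
  obtain i0 where "i0 < k" "c \<in> B i0" using blocks_cover by blast
  then have "(\<Sum>i<k. if c \<in> B i then a else 0) = (\<Sum>i<k. if i = i0 then a else 0)"
    using blocks_disj by (intro sum.cong) auto
  also have "\<dots> = a" using \<open>i0 < k\<close> by simp
  finally show ?thesis .
qed

lemma blockproj_sum_blocks:
  assumes "i < k"
  shows "blockproj (B i) (\<Sum>j<k. blockproj (B j) (v j)) = blockproj (B i) (v i)"
proof -
  have "blockproj (B i) (\<Sum>j<k. blockproj (B j) (v j))
      = (\<Sum>j<k. if j = i then blockproj (B i) (v i) else 0)"
    unfolding blockproj_sum blockproj_blockproj using blocks_disj assms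
    by (intro sum.cong) (auto simp: Int_commute blockproj_empty)
  then show ?thesis using assms by simp
qed

lemma norm_square_eq_sum_blockproj: "(norm y)\<^sup>2 = (\<Sum>i<k. (norm (blockproj (B i) y))\<^sup>2)"
proof -
  have "(\<Sum>i<k. (norm (blockproj (B i) y))\<^sup>2) = (\<Sum>c\<in>UNIV. \<Sum>i<k. if c \<in> B i then y $ c * y $ c else 0)"
    by (subst sum.swap)
       (simp add: power2_norm_eq_inner inner_vec_def blockproj_def if_distrib cong: if_cong)
  also have "\<dots> = (norm y)\<^sup>2"
    by (simp add: sum_if_in_block power2_norm_eq_inner inner_vec_def)
  finally show ?thesis by simp
qed

lemma norm_square_diff_separable:
  "(norm (a - y))\<^sup>2 = separable_fun k B (\<lambda>j v. (norm (blockproj (B j) a - v))\<^sup>2) y"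
  unfolding separable_fun_def norm_square_eq_sum_blockproj[of "a - y"] blockproj_diff ..

end

locale block_surrogate_scheme = block_partition k B
  for k :: nat and B :: "nat \<Rightarrow> 'n::finite set" +
  fixes Th :: "nat \<Rightarrow> (real ^ 'n) set" and f :: "real ^ 'n \<Rightarrow> real" and thstar :: "real ^ 'n"
    and L rho :: real and gs :: "nat list \<Rightarrow> nat \<Rightarrow> real ^ 'n \<Rightarrow> real" and x :: "nat list \<Rightarrow> real ^ 'n"
  assumes Th_convex: "\<forall>i<k. convex (Th i)"
    and thstar_in: "thstar \<in> block_product k B Th"
    and thstar_min: "\<forall>t\<in>block_product k B Th. f thstar \<le> f t"
    and x0_in: "x [] \<in> block_product k B Th"
    and rho_ge_L: "rho \<ge> L"
    and majorant: "\<forall>h. set h \<subseteq> {..<k} \<longrightarrow> (\<forall>y. f y \<le> separable_fun k B (gs h) y)"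
    and surrogate: "\<forall>h. set h \<subseteq> {..<k} \<longrightarrow>
                      first_order_surrogate_sc (block_product k B Th) L rho f (x h) (separable_fun k B (gs h))"
    and update: "\<forall>h i. set h \<subseteq> {..<k} \<longrightarrow> i < k \<longrightarrow>
                   blockproj (B i) (x (h @ [i])) \<in> Th i
                 \<and> (\<forall>z\<in>Th i. gs h i (blockproj (B i) (x (h @ [i]))) \<le> gs h i z)
                 \<and> (\<forall>j<k. j \<noteq> i \<longrightarrow> blockproj (B j) (x (h @ [i])) = blockproj (B j) (x h))"
begin

abbreviation "Theta \<equiv> block_product k B Th"

definition g :: "nat list \<Rightarrow> real ^ 'n \<Rightarrow> real" where
  "g h = separable_fun k B (gs h)"

text \<open>Minimizing every block of g h at once. Each child h @ [i] takes block i from this point and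
  the other blocks from x h, so a sum over the k children is one full step plus k - 1 idle ones.\<close>
definition full_update :: "nat list \<Rightarrow> real ^ 'n" where
  "full_update h = (\<Sum>j<k. blockproj (B j) (x (h @ [j])))"

definition gap :: "nat list \<Rightarrow> real" where
  "gap h = f (x h) - f thstar"

definition sqdist :: "nat list \<Rightarrow> real" where
  "sqdist h = (norm (thstar - x h))\<^sup>2"

lemma convex_Theta: "convex Theta"
  using Th_convex by (rule convex_block_product)

lemma update_block_in: "set h \<subseteq> {..<k} \<Longrightarrow> i < k \<Longrightarrow> blockproj (B i) (x (h @ [i])) \<in> Th i"
  and update_block_min: "set h \<subseteq> {..<k} \<Longrightarrow> i < k \<Longrightarrow> z \<in> Th i \<Longrightarrow>
         gs h i (blockproj (B i) (x (h @ [i]))) \<le> gs h i z"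
  and update_other_block: "set h \<subseteq> {..<k} \<Longrightarrow> i < k \<Longrightarrow> j < k \<Longrightarrow> j \<noteq> i \<Longrightarrow>
         blockproj (B j) (x (h @ [i])) = blockproj (B j) (x h)"
  using update by blast+

lemma x_in_Theta: "set h \<subseteq> {..<k} \<Longrightarrow> x h \<in> Theta"
proof (induction h rule: rev_induct)
  case Nil
  then show ?case using x0_in by simp
next
  case (snoc i h)
  then have h: "set h \<subseteq> {..<k}" and "i < k" by auto
  have "blockproj (B j) (x (h @ [i])) \<in> Th j" if "j < k" for j
    using snoc.IH h update_block_in[OF h \<open>i < k\<close>] update_other_block[OF h \<open>i < k\<close> that] that
    unfolding block_product_def by (cases "j = i") auto
  then show ?case unfolding block_product_def by blast
qed

lemma g_strongly_convex: "set h \<subseteq> {..<k} \<Longrightarrow> strongly_convex_on UNIV (g h) rho"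
  and g_surrogate: "set h \<subseteq> {..<k} \<Longrightarrow>
    \<exists>grad. lipschitz_gradient L (\<lambda>y. g h y - f y) grad \<and> g h (x h) - f (x h) = 0 \<and> grad (x h) = 0"
  using surrogate unfolding g_def first_order_surrogate_sc_def first_order_surrogate_def by blast+

lemma f_le_g: "set h \<subseteq> {..<k} \<Longrightarrow> f y \<le> g h y"
  using majorant unfolding g_def by blast

lemma g_at_x: "set h \<subseteq> {..<k} \<Longrightarrow> g h (x h) = f (x h)"
  using g_surrogate by fastforce

lemma L_nonneg: "0 \<le> L"
  using g_surrogate[of "[]"] lipschitz_gradient_nonneg by auto

lemma g_le_quadratic:
  assumes "set h \<subseteq> {..<k}"
  shows "g h y \<le> f y + L / 2 * (norm (y - x h))\<^sup>2"
proof -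
  obtain grad where "lipschitz_gradient L (\<lambda>y. g h y - f y) grad"
      "g h (x h) - f (x h) = 0" "grad (x h) = 0"
    using g_surrogate[OF assms] by blast
  from lipschitz_gradient_quadratic_bound[OF this, of y] show ?thesis by simp
qed

lemma blockproj_full_update: "i < k \<Longrightarrow> blockproj (B i) (full_update h) = blockproj (B i) (x (h @ [i]))"
  unfolding full_update_def by (rule blockproj_sum_blocks)

lemma full_update_in_Theta: "set h \<subseteq> {..<k} \<Longrightarrow> full_update h \<in> Theta"
  unfolding block_product_def using blockproj_full_update update_block_in by simp

lemma full_update_min:
  assumes "set h \<subseteq> {..<k}" "z \<in> Theta"
  shows "g h (full_update h) \<le> g h z"
  unfolding g_def separable_fun_def
proof (rule sum_mono)
  fix j assume "j \<in> {..<k}"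
  moreover have "blockproj (B j) z \<in> Th j" using assms(2) \<open>j \<in> {..<k}\<close> unfolding block_product_def by blast
  ultimately show "gs h j (blockproj (B j) (full_update h)) \<le> gs h j (blockproj (B j) z)"
    using update_block_min[OF assms(1)] blockproj_full_update by simp
qed

lemma blockproj_child:
  "set h \<subseteq> {..<k} \<Longrightarrow> i < k \<Longrightarrow> j < k \<Longrightarrow> blockproj (B j) (x (h @ [i])) =
     (if j = i then blockproj (B j) (full_update h) else blockproj (B j) (x h))"
  using update_other_block blockproj_full_update by auto

lemma f_child_le:
  assumes "set h \<subseteq> {..<k}" "i < k"
  shows "f (x (h @ [i])) \<le> f (x h)"
proof -
  have "blockproj (B i) (x h) \<in> Th i"
    using x_in_Theta[OF assms(1)] assms(2) unfolding block_product_def by blast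
  then have "g h (x (h @ [i])) \<le> g h (x h)"
    unfolding g_def separable_fun_def
    using update_block_min[OF assms] update_other_block[OF assms] by (intro sum_mono) force
  then show ?thesis using f_le_g[OF assms(1)] g_at_x[OF assms(1)] by (metis order_trans)
qed

lemma gap_nonneg: "set h \<subseteq> {..<k} \<Longrightarrow> 0 \<le> gap h"
  using x_in_Theta thstar_min unfolding gap_def by auto

lemma full_update_descent:
  assumes "set h \<subseteq> {..<k}"
  shows "g h (full_update h) + rho / 2 * (norm (thstar - full_update h))\<^sup>2 \<le> f thstar + L / 2 * sqdist h"
proof -
  have "g h (full_update h) + rho / 2 * (norm (thstar - full_update h))\<^sup>2 \<le> g h thstar"
    using strongly_convex_on_minimizer_growth[OF g_strongly_convex[OF assms] convex_Theta
        full_update_in_Theta[OF assms] thstar_in] full_update_min[OF assms] by blast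
  also have "\<dots> \<le> f thstar + L / 2 * sqdist h"
    using g_le_quadratic[OF assms, of thstar] unfolding sqdist_def by (simp add: norm_minus_commute)
  finally show ?thesis .
qed

lemma sum_g_children:
  assumes "set h \<subseteq> {..<k}"
  shows "(\<Sum>i<k. g h (x (h @ [i]))) = g h (full_update h) + (real k - 1) * g h (x h)"
  unfolding g_def using blockproj_child[OF assms] by (rule sum_separable_fun_single_block_updates)

lemma sum_sqdist_children:
  assumes "set h \<subseteq> {..<k}"
  shows "(\<Sum>i<k. sqdist (h @ [i])) = (norm (thstar - full_update h))\<^sup>2 + (real k - 1) * sqdist h"
  unfolding sqdist_def norm_square_diff_separable[of thstar]
  using blockproj_child[OF assms] by (rule sum_separable_fun_single_block_updates)

lemma sum_children_descent:
  assumes "set h \<subseteq> {..<k}"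
  shows "(\<Sum>i<k. gap (h @ [i])) + rho / 2 * (\<Sum>i<k. sqdist (h @ [i]))
        \<le> (real k - 1) * gap h + (L + (real k - 1) * rho) / 2 * sqdist h"
proof -
  have "(\<Sum>i<k. gap (h @ [i])) = (\<Sum>i<k. f (x (h @ [i]))) - real k * f thstar"
    unfolding gap_def by (simp add: sum_subtractf)
  moreover have "(\<Sum>i<k. f (x (h @ [i]))) \<le> (\<Sum>i<k. g h (x (h @ [i])))"
    using f_le_g[OF assms] by (intro sum_mono)
  ultimately have "(\<Sum>i<k. gap (h @ [i])) \<le> g h (full_update h) + (real k - 1) * f (x h) - real k * f thstar"
    using sum_g_children[OF assms] g_at_x[OF assms] by simp
  moreover have "rho / 2 * (\<Sum>i<k. sqdist (h @ [i]))
      = rho / 2 * (norm (thstar - full_update h))\<^sup>2 + rho / 2 * ((real k - 1) * sqdist h)"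
    unfolding sum_sqdist_children[OF assms] by (simp add: distrib_left)
  moreover have "(real k - 1) * gap h + (L + (real k - 1) * rho) / 2 * sqdist h
      = (real k - 1) * f (x h) - real k * f thstar + f thstar + L / 2 * sqdist h
        + rho / 2 * ((real k - 1) * sqdist h)"
    unfolding gap_def by (simp add: field_simps)
  ultimately show ?thesis using full_update_descent[OF assms] by linarith
qed

lemma sqdist_le_gap:
  assumes "strongly_convex_on UNIV f \<mu>" "set h \<subseteq> {..<k}"
  shows "\<mu> / 2 * sqdist h \<le> gap h"
  using strongly_convex_on_minimizer_growth[OF assms(1) convex_Theta thstar_in x_in_Theta[OF assms(2)]]
    thstar_min
  unfolding sqdist_def gap_def by (simp add: norm_minus_commute)

lemma sum_sqdist_children_contraction:
  assumes "strongly_convex_on UNIV f \<mu>" "0 < \<mu>" "set h \<subseteq> {..<k}"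
  shows "(\<Sum>i<k. sqdist (h @ [i])) \<le> (real k - 1 + L / (rho + \<mu>)) * sqdist h"
proof -
  define d where "d = (norm (thstar - full_update h))\<^sup>2"
  have "f thstar + \<mu> / 2 * d \<le> f (full_update h)"
    using strongly_convex_on_minimizer_growth[OF assms(1) convex_Theta thstar_in
        full_update_in_Theta[OF assms(3)]] thstar_min
    unfolding d_def by (simp add: norm_minus_commute)
  then have "(rho + \<mu>) * d \<le> L * sqdist h"
    using full_update_descent[OF assms(3)] f_le_g[OF assms(3), of "full_update h"]
    unfolding d_def by (simp add: algebra_simps)
  moreover have "0 < rho + \<mu>" using L_nonneg rho_ge_L assms(2) by linarith
  ultimately have "d \<le> L / (rho + \<mu>) * sqdist h" by (simp add: field_simps)
  then show ?thesis using sum_sqdist_children[OF assms(3)] unfolding d_def by (simp add: algebra_simps)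
qed

end

definition index_lists :: "nat \<Rightarrow> nat \<Rightarrow> nat list set" where
  "index_lists k n = {h. set h \<subseteq> {..<k} \<and> length h = n}"

definition uniform_mean :: "nat \<Rightarrow> nat \<Rightarrow> (nat list \<Rightarrow> real) \<Rightarrow> real" where
  "uniform_mean k n \<phi> = (\<Sum>h\<in>index_lists k n. \<phi> h) / real k ^ n"

lemma finite_index_lists: "finite (index_lists k n)"
  unfolding index_lists_def by (rule finite_lists_length_eq) simp

lemma card_index_lists: "card (index_lists k n) = k ^ n"
  unfolding index_lists_def by (simp add: card_lists_length_eq)

lemma sum_index_lists_Suc:
  "(\<Sum>h\<in>index_lists k (Suc n). \<phi> h) = (\<Sum>h\<in>index_lists k n. \<Sum>i<k. \<phi> (h @ [i]))"
proof -
  have snoc_image: "index_lists k (Suc n) = (\<lambda>(h, i). h @ [i]) ` (index_lists k n \<times> {..<k})"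
  proof (intro equalityI subsetI)
    fix h assume h: "h \<in> index_lists k (Suc n)"
    then have "h \<noteq> []" by (auto simp: index_lists_def)
    then have "h = butlast h @ [last h]" and "last h \<in> set h" by simp_all
    moreover have "butlast h \<in> index_lists k n"
      using h by (auto simp: index_lists_def dest: in_set_butlastD)
    ultimately show "h \<in> (\<lambda>(h, i). h @ [i]) ` (index_lists k n \<times> {..<k})"
      using h unfolding index_lists_def by (intro image_eqI[of _ _ "(butlast h, last h)"]) auto
  qed (auto simp: index_lists_def)
  have "inj_on (\<lambda>(h, i). h @ [i]) (index_lists k n \<times> {..<k})"
    by (auto simp: inj_on_def)
  then have "(\<Sum>h\<in>index_lists k (Suc n). \<phi> h) = (\<Sum>(h, i)\<in>index_lists k n \<times> {..<k}. \<phi> (h @ [i]))"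
    unfolding snoc_image by (simp add: sum.reindex split_def)
  then show ?thesis by (simp add: sum.cartesian_product split_def)
qed

lemma index_lists_0: "index_lists k 0 = {[]}"
  by (auto simp: index_lists_def)

lemma uniform_mean_0: "uniform_mean k 0 \<phi> = \<phi> []"
  by (simp add: uniform_mean_def index_lists_0)

lemma uniform_mean_Suc: "uniform_mean k (Suc n) \<phi> = uniform_mean k n (\<lambda>h. (\<Sum>i<k. \<phi> (h @ [i])) / real k)"
  by (simp add: uniform_mean_def sum_index_lists_Suc sum_divide_distrib[symmetric] mult.commute)

lemma uniform_mean_mono:
  assumes "\<And>h. h \<in> index_lists k n \<Longrightarrow> \<phi> h \<le> \<psi> h"
  shows "uniform_mean k n \<phi> \<le> uniform_mean k n \<psi>"
  unfolding uniform_mean_def using assms by (intro divide_right_mono sum_mono) auto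

lemma uniform_mean_nonneg:
  assumes "\<And>h. h \<in> index_lists k n \<Longrightarrow> 0 \<le> \<phi> h"
  shows "0 \<le> uniform_mean k n \<phi>"
  using uniform_mean_mono[of k n "\<lambda>_. 0" \<phi>] assms by (simp add: uniform_mean_def)

lemma uniform_mean_add: "uniform_mean k n (\<lambda>h. \<phi> h + \<psi> h) = uniform_mean k n \<phi> + uniform_mean k n \<psi>"
  by (simp add: uniform_mean_def sum.distrib add_divide_distrib)

lemma uniform_mean_cmult: "uniform_mean k n (\<lambda>h. c * \<phi> h) = c * uniform_mean k n \<phi>"
  by (simp add: uniform_mean_def sum_distrib_left)

lemma index_listsD: "h \<in> index_lists k n \<Longrightarrow> set h \<subseteq> {..<k}"
  by (simp add: index_lists_def)

context block_surrogate_scheme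
begin

lemma mean_recursion:
  "uniform_mean k (Suc n) gap + rho / 2 * uniform_mean k (Suc n) sqdist
     \<le> (1 - 1 / real k) * uniform_mean k n gap
       + ((1 - 1 / real k) * rho + 1 / real k * L) / 2 * uniform_mean k n sqdist"
proof -
  have "(\<Sum>i<k. gap (h @ [i])) / real k + rho / 2 * ((\<Sum>i<k. sqdist (h @ [i])) / real k)
      \<le> (1 - 1 / real k) * gap h + ((1 - 1 / real k) * rho + 1 / real k * L) / 2 * sqdist h"
    if "h \<in> index_lists k n" for h
  proof -
    have "0 < real k" using k_pos by simp
    have "(\<Sum>i<k. gap (h @ [i])) / real k + rho / 2 * ((\<Sum>i<k. sqdist (h @ [i])) / real k)
        = ((\<Sum>i<k. gap (h @ [i])) + rho / 2 * (\<Sum>i<k. sqdist (h @ [i]))) / real k"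
      by (simp add: add_divide_distrib)
    also have "\<dots> \<le> ((real k - 1) * gap h + (L + (real k - 1) * rho) / 2 * sqdist h) / real k"
      using sum_children_descent[OF index_listsD[OF that]] \<open>0 < real k\<close>
      by (simp add: divide_right_mono)
    also have "\<dots> = (1 - 1 / real k) * gap h + ((1 - 1 / real k) * rho + 1 / real k * L) / 2 * sqdist h"
      using \<open>0 < real k\<close> by (simp add: field_simps)
    finally show ?thesis .
  qed
  then show ?thesis
    unfolding uniform_mean_Suc[of k n] uniform_mean_cmult[symmetric] uniform_mean_add[symmetric]
    by (rule uniform_mean_mono)
qed

lemma mean_gap_antimono: "uniform_mean k (Suc n) gap \<le> uniform_mean k n gap"
  unfolding uniform_mean_Suc
proof (rule uniform_mean_mono)
  fix h assume "h \<in> index_lists k n"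
  then have "(\<Sum>i<k. gap (h @ [i])) \<le> (\<Sum>i<k. gap h)"
    using f_child_le[OF index_listsD] unfolding gap_def by (intro sum_mono) auto
  then show "(\<Sum>i<k. gap (h @ [i])) / real k \<le> gap h"
    using k_pos by (simp add: divide_le_eq mult.commute)
qed

lemma mean_gap_nonneg: "0 \<le> uniform_mean k n gap"
  by (intro uniform_mean_nonneg gap_nonneg index_listsD)

lemma mean_sqdist_nonneg: "0 \<le> uniform_mean k n sqdist"
  by (intro uniform_mean_nonneg) (simp add: sqdist_def)

lemma mean_sqdist_le_mean_gap:
  assumes "strongly_convex_on UNIV f \<mu>"
  shows "\<mu> / 2 * uniform_mean k n sqdist \<le> uniform_mean k n gap"
  unfolding uniform_mean_cmult[symmetric]
  by (intro uniform_mean_mono sqdist_le_gap[OF assms] index_listsD)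

lemma mean_sqdist_contraction:
  assumes "strongly_convex_on UNIV f \<mu>" "0 < \<mu>"
  shows "uniform_mean k (Suc n) sqdist
           \<le> ((1 - 1 / real k) + 1 / real k * (L / (rho + \<mu>))) * uniform_mean k n sqdist"
  unfolding uniform_mean_Suc uniform_mean_cmult[symmetric]
proof (rule uniform_mean_mono)
  fix h assume "h \<in> index_lists k n"
  have "0 < real k" using k_pos by simp
  have "(\<Sum>i<k. sqdist (h @ [i])) / real k \<le> (real k - 1 + L / (rho + \<mu>)) * sqdist h / real k"
    using sum_sqdist_children_contraction[OF assms index_listsD[OF \<open>h \<in> index_lists k n\<close>]]
      \<open>0 < real k\<close> by (simp add: divide_right_mono)
  also have "\<dots> = ((1 - 1 / real k) + 1 / real k * (L / (rho + \<mu>))) * sqdist h"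
  proof -
    have factor: "(real k - 1 + L / (rho + \<mu>)) / real k = (1 - 1 / real k) + 1 / real k * (L / (rho + \<mu>))"
      using \<open>0 < real k\<close> by (simp add: diff_divide_distrib add_divide_distrib)
    show ?thesis by (simp only: flip: factor) simp
  qed
  finally show "(\<Sum>i<k. sqdist (h @ [i])) / real k
      \<le> ((1 - 1 / real k) + 1 / real k * (L / (rho + \<mu>))) * sqdist h" .
qed

definition initial_bound :: real where
  "initial_bound = (1 - 1 / real k) * (f (x []) - f thstar)
     + ((1 - 1 / real k) * rho + 1 / real k * L) / 2 * (norm (x [] - thstar))\<^sup>2"

lemma initial_bound_eq:
  "initial_bound = (1 - 1 / real k) * uniform_mean k 0 gap
     + ((1 - 1 / real k) * rho + 1 / real k * L) / 2 * uniform_mean k 0 sqdist"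
  by (simp add: initial_bound_def uniform_mean_0 gap_def sqdist_def norm_minus_commute)

lemma mean_gap_sublinear:
  assumes "1 \<le> n"
  shows "uniform_mean k n gap \<le> initial_bound / ((1 - 1 / real k) + 1 / real k * real n)"
proof -
  have "0 < real k" using k_pos by simp
  have "(1 - 1 / real k) * rho + 1 / real k * L \<le> rho"
    using rho_ge_L \<open>0 < real k\<close> by (simp add: field_simps)
  moreover have "0 \<le> rho" using L_nonneg rho_ge_L by linarith
  ultimately have "uniform_mean k n gap * ((1 - 1 / real k) + 1 / real k * real n) \<le> initial_bound"
    unfolding initial_bound_eq using \<open>0 < real k\<close>
    by (intro sublinear_rate_from_recursion[where E = "\<lambda>n. uniform_mean k n gap"
          and D = "\<lambda>n. uniform_mean k n sqdist" and r = rho]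
          mean_sqdist_nonneg mean_gap_antimono mean_recursion assms) simp_all
  moreover have "0 < (1 - 1 / real k) + 1 / real k * real n"
    using k_pos assms by (simp add: field_simps)
  ultimately show ?thesis by (simp add: pos_le_divide_eq)
qed

lemma mean_rates_strongly_convex:
  assumes "strongly_convex_on UNIV f \<mu>" "0 < \<mu>" "1 \<le> n"
  shows "L / 2 * uniform_mean k n sqdist
           \<le> initial_bound * ((1 - 1 / real k) + 1 / real k * (L / (rho + \<mu>))) ^ n"
    and "uniform_mean k n gap
           \<le> initial_bound / (1 / real k) * ((1 - 1 / real k) + 1 / real k * (L / (rho + \<mu>))) ^ (n - 1)"
  using linear_rate_from_recursion[where E = "\<lambda>n. uniform_mean k n gap"
      and D = "\<lambda>n. uniform_mean k n sqdist" and \<delta> = "1 / real k" and r = rho and \<mu> = \<mu> and L = L,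
      OF _ _ L_nonneg rho_ge_L assms(2) mean_sqdist_nonneg mean_gap_nonneg mean_recursion
      mean_sqdist_contraction[OF assms(1,2)] mean_sqdist_le_mean_gap[OF assms(1)] assms(3)]
    k_pos
  unfolding initial_bound_eq by simp_all

end

lemma history_Suc: "history iota (Suc n) w = history iota n w @ [iota n w]"
  unfolding history_def by simp

lemma history_eq_iff: "length h = n \<Longrightarrow> history iota n w = h \<longleftrightarrow> (\<forall>j<n. iota j w = h ! j)"
  unfolding history_def by (auto simp: list_eq_iff_nth_eq)

lemma history_in_index_lists: "(\<And>j. iota j w < k) \<Longrightarrow> history iota n w \<in> index_lists k n"
  unfolding history_def index_lists_def by auto

locale uniform_block_sampling = prob_space M
  for M :: "'w measure" +
  fixes k :: nat and iota :: "nat \<Rightarrow> 'w \<Rightarrow> nat"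
  assumes k_ge_1: "1 \<le> k"
    and iota_indep: "indep_vars (\<lambda>_. count_space UNIV) iota UNIV"
    and iota_uniform: "\<forall>n. \<forall>i<k. prob {w \<in> space M. iota n w = i} = 1 / real k"
begin

lemma iota_measurable: "iota j \<in> measurable M (count_space UNIV)"
  using iota_indep unfolding indep_vars_def2 by auto

lemma iota_eq_event: "{w \<in> space M. iota j w = i} \<in> events"
  using measurable_sets[OF iota_measurable, of "{i}" j] by (simp add: vimage_def Int_def conj_commute)

lemma AE_iota_less: "AE w in M. \<forall>j. iota j w < k"
proof -
  have "AE w in M. iota j w < k" for j
  proof -
    have less_k: "{w \<in> space M. iota j w < k} = (\<Union>i<k. {w \<in> space M. iota j w = i})" by auto
    have "prob (\<Union>i<k. {w \<in> space M. iota j w = i}) = (\<Sum>i<k. prob {w \<in> space M. iota j w = i})"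
      by (rule finite_measure_finite_Union) (auto simp: iota_eq_event disjoint_family_on_def)
    also have "\<dots> = 1" using iota_uniform k_ge_1 by simp
    finally show ?thesis
      unfolding less_k[symmetric] using prob_Collect_eq_1[of "\<lambda>w. iota j w < k"] less_k iota_eq_event
      by (simp add: sets.finite_UN)
  qed
  then show ?thesis by (simp add: AE_all_countable)
qed

lemma prob_iota_eq: "prob {w \<in> space M. iota j w = i} = (if i < k then 1 / real k else 0)"
proof (cases "i < k")
  case False
  have "AE w in M. w \<notin> {w \<in> space M. iota j w = i}"
    using AE_iota_less False by (auto elim!: eventually_mono)
  then show ?thesis using prob_eq_0[OF iota_eq_event] False by simp
qed (use iota_uniform in simp)

lemma history_eq_event: "{w \<in> space M. history iota n w = h} \<in> events"
proof (cases "length h = n")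
  case True
  then have "{w \<in> space M. history iota n w = h} = {w \<in> space M. \<forall>j\<in>{..<n}. iota j w = h ! j}"
    by (auto simp: history_eq_iff)
  also have "\<dots> \<in> events"
    by (intro sets.sets_Collect_finite_All) (auto simp: iota_eq_event)
  finally show ?thesis .
next
  case False
  then have "{w \<in> space M. history iota n w = h} = {}" unfolding history_def by auto
  then show ?thesis by (metis sets.empty_sets)
qed

lemma history_measurable: "history iota n \<in> measurable M (count_space UNIV)"
  using history_eq_event
  by (subst measurable_count_space_eq_countable) (auto simp: vimage_def Int_def conj_commute)

lemma prob_history: "prob {w \<in> space M. history iota n w = h} = indicator (index_lists k n) h / real k ^ n"
proof -
  consider "length h \<noteq> n" | "length h = n" "n = 0" | "length h = n" "n \<noteq> 0" by blast
  then show ?thesis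
  proof cases
    case 1
    then have "{w \<in> space M. history iota n w = h} = {}" unfolding history_def by auto
    then have "prob {w \<in> space M. history iota n w = h} = 0" by (simp only: measure_empty)
    then show ?thesis using 1 by (simp add: index_lists_def)
  next
    case 2
    then show ?thesis by (simp add: history_def index_lists_def prob_space)
  next
    case 3
    have "{w \<in> space M. history iota n w = h} = (\<Inter>j\<in>{..<n}. iota j -` {h ! j} \<inter> space M)"
      using \<open>n \<noteq> 0\<close> by (auto simp: history_eq_iff[OF \<open>length h = n\<close>])
    also have "prob \<dots> = (\<Prod>j<n. prob (iota j -` {h ! j} \<inter> space M))"
      using \<open>n \<noteq> 0\<close> by (intro indep_varsD[OF iota_indep]) auto
    also have "\<dots> = (\<Prod>j<n. if h ! j < k then 1 / real k else 0)"
      using prob_iota_eq by (intro prod.cong) (auto simp: vimage_def Int_def conj_commute)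
    also have "\<dots> = indicator (index_lists k n) h / real k ^ n"
    proof (cases "h \<in> index_lists k n")
      case True
      then have "\<forall>j<n. h ! j < k" by (auto simp: index_lists_def set_conv_nth)
      then show ?thesis using True by (simp add: power_one_over)
    next
      case False
      then obtain j where "j < n" "\<not> h ! j < k"
        using \<open>length h = n\<close> by (auto simp: index_lists_def set_conv_nth)
      then have "(\<Prod>j<n. if h ! j < k then 1 / real k else 0) = 0" by (intro prod_zero) auto
      then show ?thesis using False by simp
    qed
    finally show ?thesis .
  qed
qed

lemma distr_history:
  "distr M (count_space UNIV) (history iota n) = measure_pmf (pmf_of_set (index_lists k n))"
proof (rule measure_eqI_countable[where A = UNIV])
  have "index_lists k n \<noteq> {}"
    using k_ge_1 by (auto simp: index_lists_def intro!: exI[of _ "replicate n 0"])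
  fix h :: "nat list"
  have "emeasure (distr M (count_space UNIV) (history iota n)) {h}
      = ennreal (prob {w \<in> space M. history iota n w = h})"
    using history_measurable
    by (simp add: emeasure_distr emeasure_eq_measure vimage_def Int_def conj_commute)
  also have "\<dots> = emeasure (measure_pmf (pmf_of_set (index_lists k n))) {h}"
    using \<open>index_lists k n \<noteq> {}\<close>
    by (simp add: prob_history emeasure_pmf_single finite_index_lists card_index_lists)
  finally show "emeasure (distr M (count_space UNIV) (history iota n)) {h}
      = emeasure (measure_pmf (pmf_of_set (index_lists k n))) {h}" .
qed auto

lemma integrable_history:
  fixes \<phi> :: "nat list \<Rightarrow> real"
  shows "integrable M (\<lambda>w. \<phi> (history iota n w))"
proof -
  have "index_lists k n \<noteq> {}"
    using k_ge_1 by (auto simp: index_lists_def intro!: exI[of _ "replicate n 0"])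
  then have "integrable (distr M (count_space UNIV) (history iota n)) \<phi>"
    unfolding distr_history by (simp add: integrable_measure_pmf_finite finite_index_lists)
  then show ?thesis using history_measurable by (simp add: integrable_distr_eq)
qed

lemma integral_history: "(\<integral>w. \<phi> (history iota n w) \<partial>M) = uniform_mean k n \<phi>"
proof -
  have "index_lists k n \<noteq> {}"
    using k_ge_1 by (auto simp: index_lists_def intro!: exI[of _ "replicate n 0"])
  have "(\<integral>w. \<phi> (history iota n w) \<partial>M) = integral\<^sup>L (distr M (count_space UNIV) (history iota n)) \<phi>"
    using history_measurable by (simp add: integral_distr)
  also have "\<dots> = uniform_mean k n \<phi>"
    unfolding distr_history using \<open>index_lists k n \<noteq> {}\<close>
    by (simp add: integral_pmf_of_set finite_index_lists card_index_lists uniform_mean_def)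
  finally show ?thesis .
qed

end

lemma (in prob_space) AE_tendsto_zero_if_antimono:
  fixes F :: "nat \<Rightarrow> 'a \<Rightarrow> real"
  assumes integrable: "\<And>n. integrable M (F n)"
    and nonneg: "AE w in M. \<forall>n. 0 \<le> F n w"
    and antimono: "AE w in M. \<forall>n. F (Suc n) w \<le> F n w"
    and expectation_tendsto: "(\<lambda>n. expectation (F n)) \<longlonglongrightarrow> 0"
  shows "AE w in M. (\<lambda>n. F n w) \<longlonglongrightarrow> 0"
proof -
  \<comment> \<open>by Markov's inequality, F stays above 1 / (m + 1) forever only on a null set\<close>
  have stays_above: "AE w in M. \<not> (\<forall>n. 1 / real (Suc m) \<le> F n w)" for m
  proof -
    define e where "e = 1 / real (Suc m)"
    have "0 < e" unfolding e_def by simp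
    define S where "S = {w \<in> space M. \<forall>n. e \<le> F n w}"
    have F_measurable[measurable]: "F n \<in> borel_measurable M" for n
      using integrable by blast
    have "S \<in> events" unfolding S_def by measurable
    have "prob S \<le> expectation (F n) / e" for n
    proof -
      have "prob S \<le> prob {w \<in> space M. e \<le> F n w}"
        unfolding S_def by (intro finite_measure_mono) auto
      also have "\<dots> \<le> expectation (F n) / e"
        using nonneg \<open>0 < e\<close>
        by (intro integral_Markov_inequality_measure[OF integrable \<open>S \<in> events\<close>])
           (auto elim: eventually_mono)
      finally show ?thesis .
    qed
    moreover have "(\<lambda>n. expectation (F n) / e) \<longlonglongrightarrow> 0 / e"
      by (intro tendsto_divide expectation_tendsto tendsto_const) (use \<open>0 < e\<close> in simp)
    ultimately have "prob S \<le> 0 / e"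
      by (intro LIMSEQ_le_const[of "\<lambda>n. expectation (F n) / e"]) auto
    then have "AE w in M. w \<notin> S"
      using prob_eq_0[OF \<open>S \<in> events\<close>] measure_nonneg[of M S] by simp
    then show ?thesis unfolding S_def e_def by (auto elim!: eventually_mono)
  qed
  have "AE w in M. \<forall>m. \<not> (\<forall>n. 1 / real (Suc m) \<le> F n w)"
    using stays_above by (simp add: AE_all_countable)
  with nonneg antimono show ?thesis
  proof eventually_elim
    case (elim w)
    have "decseq (\<lambda>n. F n w)" using elim(2) by (intro decseq_SucI) simp
    show ?case unfolding LIMSEQ_iff
    proof (intro allI impI)
      fix r :: real assume "0 < r"
      obtain m where "1 / real (Suc m) < r"
        using reals_Archimedean[OF \<open>0 < r\<close>] by (auto simp: inverse_eq_divide)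
      moreover obtain n0 where "F n0 w < 1 / real (Suc m)"
        using elim(3) by (auto simp: not_le)
      ultimately have "norm (F n w - 0) < r" if "n0 \<le> n" for n
        using decseqD[OF \<open>decseq (\<lambda>n. F n w)\<close> that] elim(1) by (simp add: abs_of_nonneg)
      then show "\<exists>n0. \<forall>n\<ge>n0. norm (F n w - 0) < r" by blast
    qed
  qed
qed

locale randomized_block_scheme =
  block_surrogate_scheme k B Th f thstar L rho gs x + uniform_block_sampling M k iota
  for k B Th f thstar L rho gs x M iota
begin

lemma expected_gap: "(\<integral>w. f (x (history iota n w)) - f thstar \<partial>M) = uniform_mean k n gap"
  using integral_history[of gap n] unfolding gap_def .

lemma expected_sqdist: "(\<integral>w. (norm (thstar - x (history iota n w)))\<^sup>2 \<partial>M) = uniform_mean k n sqdist"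
  using integral_history[of sqdist n] unfolding sqdist_def .

lemma sublinear_bound_tendsto_zero:
  "(\<lambda>n. initial_bound / ((1 - 1 / real k) + 1 / real k * real n)) \<longlonglongrightarrow> 0"
proof -
  have "0 < 1 / real k" using k_pos by simp
  then have "filterlim (\<lambda>n. (1 - 1 / real k) + 1 / real k * real n) at_top sequentially"
    by (intro filterlim_tendsto_add_at_top[OF tendsto_const]
        filterlim_tendsto_pos_mult_at_top[OF tendsto_const _ filterlim_real_sequentially])
  then show ?thesis
    by (intro tendsto_divide_0[OF tendsto_const] filterlim_at_top_imp_at_infinity)
qed

lemma AE_f_tendsto_min: "AE w in M. (\<lambda>n. f (x (history iota n w))) \<longlonglongrightarrow> f thstar"
proof -
  have "AE w in M. (\<lambda>n. gap (history iota n w)) \<longlonglongrightarrow> 0"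
  proof (rule AE_tendsto_zero_if_antimono)
    show "integrable M (\<lambda>w. gap (history iota n w))" for n
      by (rule integrable_history)
    show "AE w in M. \<forall>n. 0 \<le> gap (history iota n w)"
      using AE_iota_less
      by eventually_elim (metis gap_nonneg index_listsD history_in_index_lists)
    show "AE w in M. \<forall>n. gap (history iota (Suc n) w) \<le> gap (history iota n w)"
      using AE_iota_less
      by eventually_elim
         (metis history_Suc f_child_le index_listsD history_in_index_lists gap_def
           diff_right_mono)
    have "eventually (\<lambda>n. uniform_mean k n gap \<le> initial_bound / ((1 - 1 / real k) + 1 / real k * real n))
        sequentially"
      by (rule eventually_sequentiallyI[of 1]) (rule mean_gap_sublinear)
    then show "(\<lambda>n. expectation (\<lambda>w. gap (history iota n w))) \<longlonglongrightarrow> 0"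
      unfolding integral_history
      by (intro real_tendsto_sandwich[OF _ _ tendsto_const sublinear_bound_tendsto_zero])
         (simp_all add: mean_gap_nonneg)
  qed
  then show ?thesis unfolding gap_def by (simp add: LIM_zero_iff)
qed

end

theorem proposition3p3:
  fixes k :: nat
    and B :: "nat \<Rightarrow> 'n::finite set"
    and Th :: "nat \<Rightarrow> (real ^ 'n) set"
    and f :: "real ^ 'n \<Rightarrow> real"
    and thstar :: "real ^ 'n"
    and L rho :: real
    and M :: "'w measure"
    and iota :: "nat \<Rightarrow> 'w \<Rightarrow> nat"
    and gs :: "nat list \<Rightarrow> nat \<Rightarrow> real ^ 'n \<Rightarrow> real"
    and x :: "nat list \<Rightarrow> real ^ 'n"
  defines "Theta \<equiv> block_product k B Th"
    and "delta \<equiv> 1 / real k"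
    and "C0 \<equiv> (1 - 1 / real k) * (f (x []) - f thstar)
              + ((1 - 1 / real k) * rho + (1 / real k) * L) / 2 * (norm (x [] - thstar))\<^sup>2"
  assumes k_pos: "k \<ge> 1"
    and blocks_disj: "\<forall>i<k. \<forall>j<k. i \<noteq> j \<longrightarrow> B i \<inter> B j = {}"
    and blocks_cover: "(\<Union>i<k. B i) = UNIV"
    and Th_convex: "\<forall>i<k. convex (Th i)"
    and Th_block: "\<forall>i<k. Th i \<subseteq> {y. \<forall>j. j \<notin> B i \<longrightarrow> y $ j = 0}"
    and f_cont: "continuous_on UNIV f"
    and f_convex: "convex_on UNIV f"
    and f_bdd: "bdd_below (range f)"
    and thstar_in: "thstar \<in> Theta"
    and thstar_min: "\<forall>t\<in>Theta. f thstar \<le> f t"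
    and x0_in: "x [] \<in> Theta"
    and rho_ge_L: "rho \<ge> L"
    and majorant: "\<forall>h. set h \<subseteq> {..<k} \<longrightarrow> (\<forall>y. f y \<le> separable_fun k B (gs h) y)"
    and surrogate: "\<forall>h. set h \<subseteq> {..<k} \<longrightarrow>
                      first_order_surrogate_sc Theta L rho f (x h) (separable_fun k B (gs h))"
    and update: "\<forall>h i. set h \<subseteq> {..<k} \<longrightarrow> i < k \<longrightarrow>
                   blockproj (B i) (x (h @ [i])) \<in> Th i
                 \<and> (\<forall>z\<in>Th i. gs h i (blockproj (B i) (x (h @ [i]))) \<le> gs h i z)
                 \<and> (\<forall>j<k. j \<noteq> i \<longrightarrow> blockproj (B j) (x (h @ [i])) = blockproj (B j) (x h))"
    and M_prob: "prob_space M"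
    and iota_indep: "prob_space.indep_vars M (\<lambda>_. count_space UNIV) iota UNIV"
    and iota_unif: "\<forall>n. \<forall>i<k. measure M {w \<in> space M. iota n w = i} = 1 / real k"
  shows "(AE w in M. (\<lambda>n. f (x (history iota n w))) \<longlonglongrightarrow> f thstar)
       \<and> (\<forall>n\<ge>1. (\<integral>w. f (x (history iota n w)) - f thstar \<partial>M)
                  \<le> C0 / ((1 - delta) + delta * real n))
       \<and> (\<forall>mu>0. strongly_convex_on UNIV f mu \<longrightarrow>
           (\<forall>n\<ge>1.
              L / 2 * (\<integral>w. (norm (thstar - x (history iota n w)))\<^sup>2 \<partial>M)
                \<le> C0 * ((1 - delta) + delta * (L / (rho + mu))) ^ n
            \<and> (\<integral>w. f (x (history iota n w)) - f thstar \<partial>M)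
                \<le> C0 / delta * ((1 - delta) + delta * (L / (rho + mu))) ^ (n - 1)))"
proof -
  interpret randomized_block_scheme k B Th f thstar L rho gs x M iota
    using blocks_disj blocks_cover Th_convex thstar_in thstar_min x0_in rho_ge_L majorant surrogate
      update M_prob iota_indep iota_unif k_pos
    unfolding Theta_def randomized_block_scheme_def block_surrogate_scheme_def
      block_surrogate_scheme_axioms_def block_partition_def uniform_block_sampling_def
      uniform_block_sampling_axioms_def
    by blast
  have "C0 = initial_bound" unfolding C0_def initial_bound_def ..
  then show ?thesis
    unfolding delta_def expected_gap expected_sqdist
    using AE_f_tendsto_min mean_gap_sublinear mean_rates_strongly_convex by auto
qed

end
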